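(* Let $\alpha\in(0,1)$. For $\mu\in[0,\infty]$ let $f_\mu:\mathcal X\times\mathcal Y\to\{0,1\}$ and $g_\mu:\mathcal X\to\{0,1\}$ be (measurable) indicator functions such that for every $(x,y)\in\mathcal X\times\mathcal Y$: (1) $\mu\mapsto f_\mu(x,y)$ is non-increasing on $[0,\infty)$ and $f_\mu(x,y)\le g_\mu(x)$ for all $\mu\in[0,\infty)$; (2) $\mu\mapsto f_\mu(x,y)$ and $\mu\mapsto g_\mu(x)$ are right-continuous on $[0,\infty)$; (3) $f_\infty(x,y)=g_\infty(x)=0$. Let $(X_i,Y_i)_{i=1}^{n+m}$ be i.i.d. with common distribution $P_{XY}$. Define $$\mu_\alpha=\min\left\{\mu\ge 0:\ \frac{\frac{1}{n+1}\left(\sum_{i=1}^n f_\mu(X_i,Y_i)+1\right)}{\frac1m\left(1\vee\sum_{i=1}^m g_\mu(X_{n+i})\right)}\le\alpha\right\},$$ or $\mu_\alpha=\infty$ if no such $\mu$ exists. Then $$\mathbb E\left[\frac{\sum_{i=1}^m f_{\mu_\alpha}(X_{n+i},Y_{n+i})}{1\vee\sum_{i=1}^m g_{\mu_\alpha}(X_{n+i})}\right]\le\alpha.$$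
   Context: $a\vee b=\max(a,b)$. *)

theory Defs
  imports "HOL-Probability.Probability"
begin

text \<open>Indices are 0-based: calibration points are 0..n-1, test points are n..n+m-1.
  The parameter mu ranges over [0,\<infinity>], represented by ennreal.\<close>

definition FDP_hat ::
  "nat \<Rightarrow> nat \<Rightarrow> (ennreal \<Rightarrow> 'x \<Rightarrow> 'y \<Rightarrow> real) \<Rightarrow> (ennreal \<Rightarrow> 'x \<Rightarrow> real)
     \<Rightarrow> (nat \<Rightarrow> 'x) \<Rightarrow> (nat \<Rightarrow> 'y) \<Rightarrow> ennreal \<Rightarrow> real" where
  "FDP_hat n m f g xs ys \<mu> =
     ((1 / real (n + 1)) * ((\<Sum>i<n. f \<mu> (xs i) (ys i)) + 1)) /
     ((1 / real m) * max 1 (\<Sum>i<m. g \<mu> (xs (n + i))))"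

text \<open>mu_alpha: the least finite mu with FDP_hat <= alpha; \<infinity> if none (Inf of empty set).\<close>
definition mu_alpha ::
  "real \<Rightarrow> nat \<Rightarrow> nat \<Rightarrow> (ennreal \<Rightarrow> 'x \<Rightarrow> 'y \<Rightarrow> real) \<Rightarrow> (ennreal \<Rightarrow> 'x \<Rightarrow> real)
     \<Rightarrow> (nat \<Rightarrow> 'x) \<Rightarrow> (nat \<Rightarrow> 'y) \<Rightarrow> ennreal" where
  "mu_alpha \<alpha> n m f g xs ys = Inf {\<mu>. \<mu> < \<infinity> \<and> FDP_hat n m f g xs ys \<mu> \<le> \<alpha>}"

end

(* For a test point j let mu_oracle j be the threshold obtained by treating test point j as an
   additional calibration point.  If test point j is selected at mu_alpha, the two thresholds
   coincide, so the j-th summand of the FDP is at most alpha (n + 1) / m times the weight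
   f(Z_(n+j)) / (sum of f(Z_k) over the calibration points and Z_(n+j)), all at mu_oracle j.
   Since mu_oracle j is a symmetric function of these n + 1 exchangeable points, each of them
   carries the same expected weight; the weights sum to at most 1, so each has expectation at
   most 1 / (n + 1), and summing over j gives alpha. *)

theory Submission
  imports Defs "HOL-Combinatorics.Permutations"
begin

lemma tendsto_01_imp_eventually_eq:
  fixes h :: "'a \<Rightarrow> real"
  assumes "\<And>x. h x \<in> {0, 1}" "c \<in> {0, 1}" "(h \<longlongrightarrow> c) F"
  shows "eventually (\<lambda>x. h x = c) F"
proof -
  have "eventually (\<lambda>x. dist (h x) c < 1) F"
    using assms(3) tendstoD by force
  then show ?thesis
  proof eventually_elim
    case (elim x)
    then show ?case using assms(1)[of x] assms(2) by (auto simp: dist_real_def)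
  qed
qed

(* Only an infimum in general; see least_finite_attained. *)
definition least_finite :: "(ennreal \<Rightarrow> bool) \<Rightarrow> ennreal" where
  "least_finite C = Inf {\<mu>. \<mu> < \<infinity> \<and> C \<mu>}"

lemma least_finite_le: "\<mu> < \<infinity> \<Longrightarrow> C \<mu> \<Longrightarrow> least_finite C \<le> \<mu>"
  unfolding least_finite_def by (rule Inf_lower) simp

lemma least_finite_attained:
  assumes const: "\<And>\<mu>. \<mu> < \<infinity> \<Longrightarrow> eventually (\<lambda>\<nu>. C \<nu> = C \<mu>) (at_right \<mu>)"
    and fin: "least_finite C < \<infinity>"
  shows "C (least_finite C)"
proof (rule ccontr)
  let ?s = "least_finite C"
  assume not_C: "\<not> C ?s"
  obtain b where b: "?s < b" "\<And>\<nu>. ?s < \<nu> \<Longrightarrow> \<nu> < b \<Longrightarrow> C \<nu> = C ?s"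
    using const[OF fin] fin by (auto simp: eventually_at_right)
  have "b \<le> ?s" unfolding least_finite_def
  proof (rule Inf_greatest)
    fix \<mu> assume "\<mu> \<in> {\<mu>. \<mu> < \<infinity> \<and> C \<mu>}"
    then have "?s \<le> \<mu>" "C \<mu>" by (auto intro: least_finite_le)
    then show "b \<le> \<mu>" using b not_C by (metis order.not_eq_order_implies_strict not_le)
  qed
  with b show False by simp
qed

lemma least_finite_eq_INF_rat:
  assumes const: "\<And>\<mu>. \<mu> < \<infinity> \<Longrightarrow> eventually (\<lambda>\<nu>. C \<nu> = C \<mu>) (at_right \<mu>)"
  shows "least_finite C = (INF r. if C (ennreal (of_rat r)) then ennreal (of_rat r) else \<infinity>)"
    (is "_ = ?I")
proof (rule antisym)
  show "least_finite C \<le> ?I"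
    by (rule INF_greatest) (auto intro: least_finite_le)
  show "?I \<le> least_finite C"
    unfolding least_finite_def
  proof (rule Inf_greatest)
    fix \<mu> assume "\<mu> \<in> {\<mu>. \<mu> < \<infinity> \<and> C \<mu>}"
    then have \<mu>: "\<mu> < \<infinity>" "C \<mu>" by auto
    obtain b where b: "\<mu> < b" "\<And>\<nu>. \<mu> < \<nu> \<Longrightarrow> \<nu> < b \<Longrightarrow> C \<nu> = C \<mu>"
      using const[OF \<mu>(1)] \<mu>(1) by (auto simp: eventually_at_right)
    show "?I \<le> \<mu>"
    proof (rule dense_ge)
      fix y assume "\<mu> < y"
      then obtain r where r: "\<mu> < ennreal (of_rat r)" "ennreal (of_rat r) < min b y"
        using ennreal_rat_dense[of \<mu> "min b y"] b(1) by auto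
      then have "C (ennreal (of_rat r))" using b \<mu> by auto
      then have "?I \<le> ennreal (of_rat r)"
        by (metis (mono_tags, lifting) INF_lower2 UNIV_I order_refl)
      then show "?I \<le> y"
        using r(2) by (meson order.trans less_imp_le min_less_iff_conj)
    qed
  qed
qed

lemma borel_measurable_least_finite:
  assumes const: "\<And>z \<mu>. z \<in> space M \<Longrightarrow> \<mu> < \<infinity> \<Longrightarrow> eventually (\<lambda>\<nu>. C \<nu> z = C \<mu> z) (at_right \<mu>)"
    and sets: "\<And>r. {z \<in> space M. C (ennreal (of_rat r)) z} \<in> sets M"
  shows "(\<lambda>z. least_finite (\<lambda>\<mu>. C \<mu> z)) \<in> borel_measurable M"
proof -
  have "(\<lambda>z. INF r. if C (ennreal (of_rat r)) z then ennreal (of_rat r) else \<infinity>) \<in> borel_measurable M"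
    by (intro borel_measurable_INF measurable_If sets) auto
  then show ?thesis
    by (rule measurable_cong[THEN iffD1, rotated]) (rule least_finite_eq_INF_rat[symmetric], rule const)
qed

lemma antimono_01_eq_1_iff_rat:
  fixes h :: "ennreal \<Rightarrow> real"
  assumes ind: "\<And>\<nu>. h \<nu> \<in> {0, 1}"
    and antimono: "\<And>\<nu> \<nu>'. \<nu> \<le> \<nu>' \<Longrightarrow> \<nu>' < \<infinity> \<Longrightarrow> h \<nu>' \<le> h \<nu>"
    and const: "\<And>\<nu>. \<nu> < \<infinity> \<Longrightarrow> eventually (\<lambda>\<nu>'. h \<nu>' = h \<nu>) (at_right \<nu>)"
    and top: "h \<infinity> = 0"
  shows "h \<mu> = 1 \<longleftrightarrow> (\<exists>r. \<mu> < ennreal (of_rat r) \<and> h (ennreal (of_rat r)) = 1)"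
proof
  assume h1: "h \<mu> = 1"
  then have fin: "\<mu> < \<infinity>" using top by (cases "\<mu> = \<infinity>") (auto simp: top.not_eq_extremum)
  obtain b where b: "\<mu> < b" "\<And>\<nu>. \<mu> < \<nu> \<Longrightarrow> \<nu> < b \<Longrightarrow> h \<nu> = h \<mu>"
    using const[OF fin] fin by (auto simp: eventually_at_right)
  obtain r where "\<mu> < ennreal (of_rat r)" "ennreal (of_rat r) < b"
    using ennreal_rat_dense[OF b(1)] by auto
  then show "\<exists>r. \<mu> < ennreal (of_rat r) \<and> h (ennreal (of_rat r)) = 1"
    using b(2) h1 by auto
next
  assume "\<exists>r. \<mu> < ennreal (of_rat r) \<and> h (ennreal (of_rat r)) = 1"
  then obtain r where "\<mu> < ennreal (of_rat r)" "h (ennreal (of_rat r)) = 1" by auto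
  then have "1 \<le> h \<mu>" using antimono[of \<mu> "ennreal (of_rat r)"] by simp
  then show "h \<mu> = 1" using ind[of \<mu>] by auto
qed

lemma borel_measurable_antimono_01_at:
  fixes h :: "ennreal \<Rightarrow> 'b \<Rightarrow> real"
  assumes \<mu>: "\<mu> \<in> borel_measurable M"
    and h_meas: "\<And>r. h (ennreal (of_rat r)) \<in> borel_measurable M"
    and ind: "\<And>\<nu> z. z \<in> space M \<Longrightarrow> h \<nu> z \<in> {0, 1}"
    and antimono: "\<And>\<nu> \<nu>' z. z \<in> space M \<Longrightarrow> \<nu> \<le> \<nu>' \<Longrightarrow> \<nu>' < \<infinity> \<Longrightarrow> h \<nu>' z \<le> h \<nu> z"
    and const: "\<And>\<nu> z. z \<in> space M \<Longrightarrow> \<nu> < \<infinity> \<Longrightarrow> eventually (\<lambda>\<nu>'. h \<nu>' z = h \<nu> z) (at_right \<nu>)"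
    and top: "\<And>z. z \<in> space M \<Longrightarrow> h \<infinity> z = 0"
  shows "(\<lambda>z. h (\<mu> z) z) \<in> borel_measurable M"
proof -
  have meas: "(\<lambda>z. if \<exists>r. \<mu> z < ennreal (of_rat r) \<and> h (ennreal (of_rat r)) z = 1 then 1 else 0 :: real)
      \<in> borel_measurable M"
    using \<mu> h_meas by measurable
  have eq: "h (\<mu> z) z = (if \<exists>r. \<mu> z < ennreal (of_rat r) \<and> h (ennreal (of_rat r)) z = 1 then 1 else 0)"
    if "z \<in> space M" for z
  proof -
    have "h (\<mu> z) z = 1 \<longleftrightarrow> (\<exists>r. \<mu> z < ennreal (of_rat r) \<and> h (ennreal (of_rat r)) z = 1)"
      by (rule antimono_01_eq_1_iff_rat) (use that ind antimono const top in auto)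
    then show ?thesis using ind[OF that, of "\<mu> z"] by auto
  qed
  show ?thesis
    by (rule measurable_cong[THEN iffD2, OF _ meas]) (simp add: eq)
qed

lemma (in prob_space) distr_restrict_iid:
  assumes indep: "indep_vars (\<lambda>_. N) Z I" and ident: "\<And>i. i \<in> I \<Longrightarrow> distr M N (Z i) = P"
    and "I \<noteq> {}"
  shows "distr M (\<Pi>\<^sub>M i\<in>I. N) (\<lambda>\<omega>. \<lambda>i\<in>I. Z i \<omega>) = (\<Pi>\<^sub>M i\<in>I. P)"
proof -
  have rv: "random_variable N (Z i)" if "i \<in> I" for i
    using indep that by (simp add: indep_vars_def2)
  have "distr M (\<Pi>\<^sub>M i\<in>I. N) (\<lambda>\<omega>. \<lambda>i\<in>I. Z i \<omega>) = (\<Pi>\<^sub>M i\<in>I. distr M N (Z i))"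
    using indep_vars_iff_distr_eq_PiM'[of I Z "\<lambda>_. N"] \<open>I \<noteq> {}\<close> rv indep by blast
  also have "\<dots> = (\<Pi>\<^sub>M i\<in>I. P)"
    by (rule PiM_cong) (simp_all add: ident)
  finally show ?thesis .
qed

lemma (in prob_space) expectation_iid_permute:
  fixes F :: "('i \<Rightarrow> 'b) \<Rightarrow> real"
  assumes indep: "indep_vars (\<lambda>_. N) Z I" and ident: "\<And>i. i \<in> I \<Longrightarrow> distr M N (Z i) = P"
    and \<sigma>: "\<sigma> permutes I" and F: "F \<in> borel_measurable (\<Pi>\<^sub>M i\<in>I. N)"
  shows "expectation (\<lambda>\<omega>. F (\<lambda>i\<in>I. Z (\<sigma> i) \<omega>)) = expectation (\<lambda>\<omega>. F (\<lambda>i\<in>I. Z i \<omega>))"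
proof (cases "I = {}")
  case False
  then obtain i0 where "i0 \<in> I" by auto
  let ?Q = "\<Pi>\<^sub>M i\<in>I. P" and ?Z = "\<lambda>\<omega>. \<lambda>i\<in>I. Z i \<omega>"
  define reindex where "reindex = (\<lambda>z. \<lambda>i\<in>I. z (\<sigma> i) :: 'b)"
  have P: "prob_space P" and sets_P: "sets P = sets N"
    using ident[OF \<open>i0 \<in> I\<close>] indep \<open>i0 \<in> I\<close> by (auto simp: indep_vars_def2 intro!: prob_space_distr)
  have sets_Q: "sets ?Q = sets (\<Pi>\<^sub>M i\<in>I. N)"
    using sets_P by (intro sets_PiM_cong) auto
  have F_Q: "F \<in> borel_measurable ?Q"
    using F by (simp add: measurable_cong_sets[OF sets_Q refl])
  have Z: "?Z \<in> measurable M (\<Pi>\<^sub>M i\<in>I. N)"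
    using indep by (auto simp: indep_vars_def2 intro!: measurable_restrict)
  have distr_Z: "distr M (\<Pi>\<^sub>M i\<in>I. N) ?Z = ?Q"
    by (rule distr_restrict_iid[OF indep ident False])
  have \<sigma>I: "\<sigma> \<in> I \<rightarrow> I" "inj_on \<sigma> I"
    using \<sigma> by (auto simp: permutes_in_image permutes_inj_on)
  have reindex: "reindex \<in> measurable ?Q ?Q" "distr ?Q ?Q reindex = ?Q"
    using distr_PiM_reindex[of I "\<lambda>_. P" \<sigma> I] P \<sigma>I unfolding reindex_def
    by (auto intro!: measurable_restrict measurable_component_singleton)
  have "expectation (\<lambda>\<omega>. F (\<lambda>i\<in>I. Z (\<sigma> i) \<omega>)) = expectation (\<lambda>\<omega>. F (reindex (?Z \<omega>)))"
    by (intro Bochner_Integration.integral_cong refl arg_cong[where f=F])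
      (auto simp: reindex_def permutes_in_image[OF \<sigma>])
  also have "\<dots> = integral\<^sup>L ?Q (\<lambda>z. F (reindex z))"
  proof -
    have "(\<lambda>z. F (reindex z)) \<in> borel_measurable (\<Pi>\<^sub>M i\<in>I. N)"
      using measurable_compose[OF reindex(1) F_Q] by (simp add: measurable_cong_sets[OF sets_Q refl])
    from integral_distr[OF Z this] show ?thesis using distr_Z by simp
  qed
  also have "\<dots> = integral\<^sup>L ?Q F"
    using integral_distr[OF reindex(1) F_Q] reindex(2) by simp
  also have "\<dots> = expectation (\<lambda>\<omega>. F (?Z \<omega>))"
    using distr_Z integral_distr[OF Z F] by simp
  finally show ?thesis .
qed (simp add: restrict_def)

(* FDP_hat with test point j moved into the calibration sample, its g-value counted as 1.
   The resulting threshold mu_oracle is symmetric in the points insert (n + j) {..<n} and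
   agrees with mu_alpha whenever test point j is selected. *)
definition FDP_oracle ::
  "nat \<Rightarrow> nat \<Rightarrow> (ennreal \<Rightarrow> 'x \<Rightarrow> 'y \<Rightarrow> real) \<Rightarrow> (ennreal \<Rightarrow> 'x \<Rightarrow> real)
     \<Rightarrow> nat \<Rightarrow> (nat \<Rightarrow> 'x \<times> 'y) \<Rightarrow> ennreal \<Rightarrow> real" where
  "FDP_oracle n m f g j z \<mu> =
     ((1 / real (n + 1)) * (\<Sum>k\<in>insert (n + j) {..<n}. f \<mu> (fst (z k)) (snd (z k)))) /
     ((1 / real m) * max 1 ((\<Sum>i\<in>{..<m} - {j}. g \<mu> (fst (z (n + i)))) + 1))"

definition mu_oracle ::
  "real \<Rightarrow> nat \<Rightarrow> nat \<Rightarrow> (ennreal \<Rightarrow> 'x \<Rightarrow> 'y \<Rightarrow> real) \<Rightarrow> (ennreal \<Rightarrow> 'x \<Rightarrow> real)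
     \<Rightarrow> nat \<Rightarrow> (nat \<Rightarrow> 'x \<times> 'y) \<Rightarrow> ennreal" where
  "mu_oracle \<alpha> n m f g j z = least_finite (\<lambda>\<mu>. FDP_oracle n m f g j z \<mu> \<le> \<alpha>)"

definition oracle_weight ::
  "real \<Rightarrow> nat \<Rightarrow> nat \<Rightarrow> (ennreal \<Rightarrow> 'x \<Rightarrow> 'y \<Rightarrow> real) \<Rightarrow> (ennreal \<Rightarrow> 'x \<Rightarrow> real)
     \<Rightarrow> nat \<Rightarrow> nat \<Rightarrow> (nat \<Rightarrow> 'x \<times> 'y) \<Rightarrow> real" where
  "oracle_weight \<alpha> n m f g j k z =
     (let \<mu> = mu_oracle \<alpha> n m f g j z in
      f \<mu> (fst (z k)) (snd (z k)) / (\<Sum>l\<in>insert (n + j) {..<n}. f \<mu> (fst (z l)) (snd (z l))))"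

lemma mu_alpha_eq_least_finite:
  "mu_alpha \<alpha> n m f g xs ys = least_finite (\<lambda>\<mu>. FDP_hat n m f g xs ys \<mu> \<le> \<alpha>)"
  by (simp add: mu_alpha_def least_finite_def)

lemma FDP_hat_le_iff:
  assumes "0 < m"
  shows "FDP_hat n m f g xs ys \<mu> \<le> \<alpha> \<longleftrightarrow>
    ((\<Sum>i<n. f \<mu> (xs i) (ys i)) + 1) * real m \<le> \<alpha> * (real (n + 1) * max 1 (\<Sum>i<m. g \<mu> (xs (n + i))))"
proof -
  let ?S = "\<Sum>i<n. f \<mu> (xs i) (ys i)" and ?G = "max 1 (\<Sum>i<m. g \<mu> (xs (n + i)))"
  have pos: "0 < real (n + 1) * ?G" by (intro mult_pos_pos) auto
  have "FDP_hat n m f g xs ys \<mu> = (?S + 1) * real m / (real (n + 1) * ?G)"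
    using assms pos by (simp add: FDP_hat_def field_simps)
  then show ?thesis
    using pos by (simp add: pos_divide_le_eq)
qed

lemma sum_oracle_weight_le_1: "(\<Sum>k\<in>insert (n + j) {..<n}. oracle_weight \<alpha> n m f g j k z) \<le> 1"
  unfolding oracle_weight_def Let_def sum_divide_distrib[symmetric] by (simp add: divide_le_eq_1)

lemma oracle_weight_transpose:
  assumes k: "k < n" and j: "j < m"
    and z': "\<And>i. i < n + m \<Longrightarrow> z' i = z (Transposition.transpose k (n + j) i)"
  shows "oracle_weight \<alpha> n m f g j (n + j) z' = oracle_weight \<alpha> n m f g j k z"
proof -
  let ?T = "insert (n + j) {..<n}"
  have sum_T: "(\<Sum>l\<in>?T. h (z' l)) = (\<Sum>l\<in>?T. h (z l))" for h :: "_ \<Rightarrow> real"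
  proof -
    have "Transposition.transpose k (n + j) permutes ?T"
      using k by (intro permutes_swap_id) auto
    then have "(\<Sum>l\<in>?T. h (z (Transposition.transpose k (n + j) l))) = (\<Sum>l\<in>?T. h (z l))"
      by (rule sum.permute[symmetric, unfolded comp_def])
    moreover have "(\<Sum>l\<in>?T. h (z' l)) = (\<Sum>l\<in>?T. h (z (Transposition.transpose k (n + j) l)))"
      using j k by (intro sum.cong) (auto simp: z')
    ultimately show ?thesis by simp
  qed
  have sum_test: "(\<Sum>i\<in>{..<m} - {j}. h (z' (n + i))) = (\<Sum>i\<in>{..<m} - {j}. h (z (n + i)))"
    for h :: "_ \<Rightarrow> real"
    using k by (intro sum.cong) (auto simp: z' Transposition.transpose_def)
  have "FDP_oracle n m f g j z' = FDP_oracle n m f g j z"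
    unfolding FDP_oracle_def
    using sum_T[of "\<lambda>w. f _ (fst w) (snd w)"] sum_test[of "\<lambda>w. g _ (fst w)"] by simp
  then have mu: "mu_oracle \<alpha> n m f g j z' = mu_oracle \<alpha> n m f g j z"
    unfolding mu_oracle_def by simp
  show ?thesis
    unfolding oracle_weight_def Let_def mu
    using sum_T[of "\<lambda>w. f (mu_oracle \<alpha> n m f g j z) (fst w) (snd w)"] z'[of "n + j"] j by simp
qed

locale fdr_setting =
  fixes MX :: "'x measure" and MY :: "'y measure"
    and f :: "ennreal \<Rightarrow> 'x \<Rightarrow> 'y \<Rightarrow> real" and g :: "ennreal \<Rightarrow> 'x \<Rightarrow> real"
    and \<alpha> :: real and n m :: nat
  assumes alpha_pos: "0 < \<alpha>" and m_pos: "0 < m"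
    and f_meas: "\<And>\<mu>. (\<lambda>(x, y). f \<mu> x y) \<in> borel_measurable (MX \<Otimes>\<^sub>M MY)"
    and g_meas: "\<And>\<mu>. g \<mu> \<in> borel_measurable MX"
    and f_ind: "\<And>\<mu> x y. x \<in> space MX \<Longrightarrow> y \<in> space MY \<Longrightarrow> f \<mu> x y \<in> {0, 1}"
    and g_ind: "\<And>\<mu> x. x \<in> space MX \<Longrightarrow> g \<mu> x \<in> {0, 1}"
    and f_mono: "\<And>\<mu> \<nu> x y. x \<in> space MX \<Longrightarrow> y \<in> space MY \<Longrightarrow> \<mu> \<le> \<nu> \<Longrightarrow> \<nu> < \<infinity>
                  \<Longrightarrow> f \<nu> x y \<le> f \<mu> x y"
    and f_le_g: "\<And>\<mu> x y. x \<in> space MX \<Longrightarrow> y \<in> space MY \<Longrightarrow> \<mu> < \<infinity> \<Longrightarrow> f \<mu> x y \<le> g \<mu> x"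
    and f_rcont: "\<And>\<mu> x y. x \<in> space MX \<Longrightarrow> y \<in> space MY \<Longrightarrow> \<mu> < \<infinity>
                  \<Longrightarrow> ((\<lambda>\<nu>. f \<nu> x y) \<longlongrightarrow> f \<mu> x y) (at_right \<mu>)"
    and g_rcont: "\<And>\<mu> x. x \<in> space MX \<Longrightarrow> \<mu> < \<infinity>
                  \<Longrightarrow> ((\<lambda>\<nu>. g \<nu> x) \<longlongrightarrow> g \<mu> x) (at_right \<mu>)"
    and f_inf: "\<And>x y. x \<in> space MX \<Longrightarrow> y \<in> space MY \<Longrightarrow> f \<infinity> x y = 0"
begin

lemma f_nonneg: "x \<in> space MX \<Longrightarrow> y \<in> space MY \<Longrightarrow> 0 \<le> f \<mu> x y"
  using f_ind[of x y \<mu>] by auto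

lemma f_eventually_const:
  "x \<in> space MX \<Longrightarrow> y \<in> space MY \<Longrightarrow> \<mu> < \<infinity> \<Longrightarrow>
     eventually (\<lambda>\<nu>. f \<nu> x y = f \<mu> x y) (at_right \<mu>)"
  using f_ind f_rcont by (intro tendsto_01_imp_eventually_eq) auto

lemma g_eventually_const:
  "x \<in> space MX \<Longrightarrow> \<mu> < \<infinity> \<Longrightarrow> eventually (\<lambda>\<nu>. g \<nu> x = g \<mu> x) (at_right \<mu>)"
  using g_ind g_rcont by (intro tendsto_01_imp_eventually_eq) auto

lemma sums_eventually_const:
  assumes "finite K" "finite L" "\<And>k. k \<in> K \<Longrightarrow> x k \<in> space MX \<and> y k \<in> space MY"
    and "\<And>l. l \<in> L \<Longrightarrow> x' l \<in> space MX" and "\<mu> < \<infinity>"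
  shows "eventually (\<lambda>\<nu>. (\<Sum>k\<in>K. f \<nu> (x k) (y k)) = (\<Sum>k\<in>K. f \<mu> (x k) (y k)) \<and>
                          (\<Sum>l\<in>L. g \<nu> (x' l)) = (\<Sum>l\<in>L. g \<mu> (x' l))) (at_right \<mu>)"
proof -
  have "eventually (\<lambda>\<nu>. \<forall>k\<in>K. f \<nu> (x k) (y k) = f \<mu> (x k) (y k)) (at_right \<mu>)"
    using assms by (intro eventually_ball_finite ballI f_eventually_const) auto
  moreover have "eventually (\<lambda>\<nu>. \<forall>l\<in>L. g \<nu> (x' l) = g \<mu> (x' l)) (at_right \<mu>)"
    using assms by (intro eventually_ball_finite ballI g_eventually_const) auto
  ultimately show ?thesis
    by eventually_elim (auto intro!: sum.cong)
qed

lemma FDP_hat_le_eventually_const: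
  assumes "\<And>i. i < n + m \<Longrightarrow> xs i \<in> space MX \<and> ys i \<in> space MY" and "\<mu> < \<infinity>"
  shows "eventually (\<lambda>\<nu>. (FDP_hat n m f g xs ys \<nu> \<le> \<alpha>) = (FDP_hat n m f g xs ys \<mu> \<le> \<alpha>)) (at_right \<mu>)"
proof -
  have "eventually (\<lambda>\<nu>. (\<Sum>k<n. f \<nu> (xs k) (ys k)) = (\<Sum>k<n. f \<mu> (xs k) (ys k)) \<and>
                        (\<Sum>i<m. g \<nu> (xs (n + i))) = (\<Sum>i<m. g \<mu> (xs (n + i)))) (at_right \<mu>)"
    by (rule sums_eventually_const) (use assms in auto)
  then show ?thesis
    by (rule eventually_mono) (simp add: FDP_hat_def)
qed

lemma FDP_oracle_le_eventually_const:
  assumes "\<And>i. i < n + m \<Longrightarrow> fst (z i) \<in> space MX \<and> snd (z i) \<in> space MY"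
    and "j < m" and "\<mu> < \<infinity>"
  shows "eventually (\<lambda>\<nu>. (FDP_oracle n m f g j z \<nu> \<le> \<alpha>) = (FDP_oracle n m f g j z \<mu> \<le> \<alpha>)) (at_right \<mu>)"
proof -
  have "eventually (\<lambda>\<nu>.
      (\<Sum>k\<in>insert (n + j) {..<n}. f \<nu> (fst (z k)) (snd (z k))) =
        (\<Sum>k\<in>insert (n + j) {..<n}. f \<mu> (fst (z k)) (snd (z k))) \<and>
      (\<Sum>i\<in>{..<m} - {j}. g \<nu> (fst (z (n + i)))) = (\<Sum>i\<in>{..<m} - {j}. g \<mu> (fst (z (n + i)))))
      (at_right \<mu>)"
    by (rule sums_eventually_const) (use assms in auto)
  then show ?thesis
    by (rule eventually_mono) (simp only: FDP_oracle_def)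
qed

lemma f_eq_1_imp_finite: "x \<in> space MX \<Longrightarrow> y \<in> space MY \<Longrightarrow> f \<mu> x y = 1 \<Longrightarrow> \<mu> < \<infinity>"
  using f_inf[of x y] by (cases "\<mu> = \<infinity>") (auto simp: less_top)

lemma FDP_hat_mu_alpha_le:
  assumes "\<And>i. i < n + m \<Longrightarrow> xs i \<in> space MX \<and> ys i \<in> space MY"
    and "mu_alpha \<alpha> n m f g xs ys < \<infinity>"
  shows "FDP_hat n m f g xs ys (mu_alpha \<alpha> n m f g xs ys) \<le> \<alpha>"
  using least_finite_attained[of "\<lambda>\<mu>. FDP_hat n m f g xs ys \<mu> \<le> \<alpha>",
      OF FDP_hat_le_eventually_const[OF assms(1)]] assms(2)
  by (simp add: mu_alpha_eq_least_finite)

lemma FDP_oracle_mu_oracle_le: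
  assumes "\<And>i. i < n + m \<Longrightarrow> fst (z i) \<in> space MX \<and> snd (z i) \<in> space MY"
    and "j < m" and "mu_oracle \<alpha> n m f g j z < \<infinity>"
  shows "FDP_oracle n m f g j z (mu_oracle \<alpha> n m f g j z) \<le> \<alpha>"
  using least_finite_attained[of "\<lambda>\<mu>. FDP_oracle n m f g j z \<mu> \<le> \<alpha>",
      OF FDP_oracle_le_eventually_const[OF assms(1,2)]] assms(3)
  by (simp add: mu_oracle_def)

lemma oracle_weight_nonneg:
  assumes "\<And>i. i < n + m \<Longrightarrow> fst (z i) \<in> space MX \<and> snd (z i) \<in> space MY" and "j < m" and "k < n + m"
  shows "0 \<le> oracle_weight \<alpha> n m f g j k z"
  unfolding oracle_weight_def Let_def using assms
  by (intro divide_nonneg_nonneg sum_nonneg f_nonneg) auto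

lemma oracle_weight_le_1:
  assumes z: "\<And>i. i < n + m \<Longrightarrow> fst (z i) \<in> space MX \<and> snd (z i) \<in> space MY"
    and j: "j < m" and k: "k \<in> insert (n + j) {..<n}"
  shows "oracle_weight \<alpha> n m f g j k z \<le> 1"
proof -
  let ?f = "\<lambda>l. f (mu_oracle \<alpha> n m f g j z) (fst (z l)) (snd (z l))"
  have "?f k \<le> (\<Sum>l\<in>insert (n + j) {..<n}. ?f l)"
    using z j by (intro member_le_sum[OF k] f_nonneg) auto
  moreover have "0 \<le> (\<Sum>l\<in>insert (n + j) {..<n}. ?f l)"
    using z j by (intro sum_nonneg f_nonneg) auto
  ultimately show ?thesis
    unfolding oracle_weight_def Let_def by (auto simp: divide_le_eq_1)
qed

lemma FDP_hat_eq_FDP_oracle: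
  assumes z: "\<And>i. i < n + m \<Longrightarrow> z i = (xs i, ys i)"
    and xys: "\<And>i. i < n + m \<Longrightarrow> xs i \<in> space MX \<and> ys i \<in> space MY"
    and j: "j < m" and \<mu>: "\<mu> < \<infinity>" and f1: "f \<mu> (xs (n + j)) (ys (n + j)) = 1"
  shows "FDP_hat n m f g xs ys \<mu> = FDP_oracle n m f g j z \<mu>"
proof -
  have "g \<mu> (xs (n + j)) = 1"
    using f_le_g[of "xs (n + j)" "ys (n + j)" \<mu>] g_ind[of "xs (n + j)" \<mu>] xys[of "n + j"] j \<mu> f1
    by auto
  then have "(\<Sum>i<m. g \<mu> (xs (n + i))) = (\<Sum>i\<in>{..<m} - {j}. g \<mu> (fst (z (n + i)))) + 1"
    using sum.remove[of "{..<m}" j "\<lambda>i. g \<mu> (xs (n + i))"] j z by (simp add: add.commute)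
  moreover have "(\<Sum>k\<in>insert (n + j) {..<n}. f \<mu> (fst (z k)) (snd (z k)))
      = (\<Sum>k<n. f \<mu> (xs k) (ys k)) + 1"
    using z j f1 by (simp add: add.commute)
  ultimately show ?thesis
    by (simp add: FDP_hat_def FDP_oracle_def)
qed

lemma mu_oracle_eq_mu_alpha:
  assumes z: "\<And>i. i < n + m \<Longrightarrow> z i = (xs i, ys i)"
    and xys: "\<And>i. i < n + m \<Longrightarrow> xs i \<in> space MX \<and> ys i \<in> space MY"
    and j: "j < m" and f1: "f (mu_alpha \<alpha> n m f g xs ys) (xs (n + j)) (ys (n + j)) = 1"
  shows "mu_oracle \<alpha> n m f g j z = mu_alpha \<alpha> n m f g xs ys"
proof -
  let ?\<mu> = "mu_alpha \<alpha> n m f g xs ys" and ?\<mu>' = "mu_oracle \<alpha> n m f g j z"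
  have zs: "\<And>i. i < n + m \<Longrightarrow> fst (z i) \<in> space MX \<and> snd (z i) \<in> space MY"
    using z xys by simp
  have xy: "xs (n + j) \<in> space MX" "ys (n + j) \<in> space MY" using xys j by auto
  have fin: "?\<mu> < \<infinity>"
    using f_eq_1_imp_finite[OF xy f1] .
  have "FDP_oracle n m f g j z ?\<mu> \<le> \<alpha>"
    using FDP_hat_mu_alpha_le[OF xys fin]
      FDP_hat_eq_FDP_oracle[where xs = xs and ys = ys and z = z, OF z xys j fin f1] by simp
  then have le: "?\<mu>' \<le> ?\<mu>"
    unfolding mu_oracle_def using fin by (rule least_finite_le[rotated])
  then have fin': "?\<mu>' < \<infinity>" using fin by auto
  have "f ?\<mu>' (xs (n + j)) (ys (n + j)) = 1"
    using f_mono[OF xy le fin] f_ind[OF xy, of ?\<mu>'] f1 by auto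
  then have "FDP_hat n m f g xs ys ?\<mu>' \<le> \<alpha>"
    using FDP_oracle_mu_oracle_le[OF zs j fin']
      FDP_hat_eq_FDP_oracle[where xs = xs and ys = ys and z = z, OF z xys j fin'] by simp
  then have "?\<mu> \<le> ?\<mu>'"
    unfolding mu_alpha_eq_least_finite using fin' by (rule least_finite_le[rotated])
  with le show ?thesis by simp
qed

lemma FDP_term_le_oracle_weight:
  assumes z: "\<And>i. i < n + m \<Longrightarrow> z i = (xs i, ys i)"
    and xys: "\<And>i. i < n + m \<Longrightarrow> xs i \<in> space MX \<and> ys i \<in> space MY"
    and j: "j < m"
  shows "f (mu_alpha \<alpha> n m f g xs ys) (xs (n + j)) (ys (n + j)) /
           max 1 (\<Sum>i<m. g (mu_alpha \<alpha> n m f g xs ys) (xs (n + i)))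
         \<le> \<alpha> * real (n + 1) / real m * oracle_weight \<alpha> n m f g j (n + j) z"
proof -
  let ?\<mu> = "mu_alpha \<alpha> n m f g xs ys"
  have xy: "xs (n + j) \<in> space MX" "ys (n + j) \<in> space MY" using xys j by auto
  consider "f ?\<mu> (xs (n + j)) (ys (n + j)) = 0" | "f ?\<mu> (xs (n + j)) (ys (n + j)) = 1"
    using f_ind[OF xy] by auto
  then show ?thesis
  proof cases
    case 1
    have "0 \<le> oracle_weight \<alpha> n m f g j (n + j) z"
      using z xys j by (intro oracle_weight_nonneg) auto
    with 1 show ?thesis using alpha_pos by simp
  next
    case 2
    let ?S = "\<Sum>k<n. f ?\<mu> (xs k) (ys k)" and ?G = "max 1 (\<Sum>i<m. g ?\<mu> (xs (n + i)))"
    have "FDP_hat n m f g xs ys ?\<mu> \<le> \<alpha>"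
      using FDP_hat_mu_alpha_le[OF xys f_eq_1_imp_finite[OF xy 2]] .
    then have "(?S + 1) * real m \<le> \<alpha> * (real (n + 1) * ?G)"
      using FDP_hat_le_iff[OF m_pos] by blast
    moreover have "0 < (?S + 1) * real m"
      using xys m_pos by (intro mult_pos_pos add_nonneg_pos sum_nonneg f_nonneg) auto
    ultimately have "1 / ?G \<le> \<alpha> * real (n + 1) / real m * (1 / (?S + 1))"
      by (simp add: field_simps le_divide_eq)
    moreover have "oracle_weight \<alpha> n m f g j (n + j) z = 1 / (?S + 1)"
      using mu_oracle_eq_mu_alpha[OF z xys j 2] z j 2 by (simp add: oracle_weight_def add.commute)
    ultimately show ?thesis using 2 by simp
  qed
qed

lemma FDP_le_sum_oracle_weight:
  assumes "\<And>i. i < n + m \<Longrightarrow> z i = (xs i, ys i)"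
    and "\<And>i. i < n + m \<Longrightarrow> xs i \<in> space MX \<and> ys i \<in> space MY"
  shows "(let \<mu> = mu_alpha \<alpha> n m f g xs ys in
            (\<Sum>i<m. f \<mu> (xs (n + i)) (ys (n + i))) / max 1 (\<Sum>i<m. g \<mu> (xs (n + i))))
         \<le> \<alpha> * real (n + 1) / real m * (\<Sum>j<m. oracle_weight \<alpha> n m f g j (n + j) z)"
  unfolding Let_def sum_divide_distrib sum_distrib_left
  using assms by (intro sum_mono FDP_term_le_oracle_weight) auto

lemma borel_measurable_oracle_weight:
  assumes j: "j < m" and k: "k < n + m"
  shows "oracle_weight \<alpha> n m f g j k \<in> borel_measurable (\<Pi>\<^sub>M i\<in>{..<n + m}. MX \<Otimes>\<^sub>M MY)"
proof -
  let ?PN = "\<Pi>\<^sub>M i\<in>{..<n + m}. MX \<Otimes>\<^sub>M MY"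
  have space: "fst (z i) \<in> space MX \<and> snd (z i) \<in> space MY" if "z \<in> space ?PN" "i < n + m" for z i
    using that by (auto simp: space_PiM space_pair_measure PiE_iff mem_Times_iff)
  have f_comp: "(\<lambda>z. f \<nu> (fst (z l)) (snd (z l))) \<in> borel_measurable ?PN" if "l < n + m" for \<nu> l
  proof -
    have "(\<lambda>z. (\<lambda>(x, y). f \<nu> x y) (z l)) \<in> borel_measurable ?PN"
      by (rule measurable_compose[OF measurable_component_singleton[where M = "\<lambda>_. MX \<Otimes>\<^sub>M MY"] f_meas])
        (use that in auto)
    then show ?thesis by (simp add: split_beta)
  qed
  have g_comp: "(\<lambda>z. g \<nu> (fst (z l))) \<in> borel_measurable ?PN" if "l < n + m" for \<nu> l
    by (rule measurable_compose[OF measurable_compose[OF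
          measurable_component_singleton[where M = "\<lambda>_. MX \<Otimes>\<^sub>M MY"] measurable_fst] g_meas])
      (use that in auto)
  have FDP: "(\<lambda>z. FDP_oracle n m f g j z \<nu>) \<in> borel_measurable ?PN" for \<nu>
    unfolding FDP_oracle_def using j
    by (intro borel_measurable_divide borel_measurable_times borel_measurable_const borel_measurable_max
        borel_measurable_add borel_measurable_sum f_comp g_comp) auto
  have mu: "mu_oracle \<alpha> n m f g j \<in> borel_measurable ?PN"
    unfolding mu_oracle_def
    by (rule borel_measurable_least_finite)
      (use FDP_oracle_le_eventually_const space j
        in \<open>auto intro: pred_le_const[OF FDP, unfolded pred_def]\<close>)
  have f_mu: "(\<lambda>z. f (mu_oracle \<alpha> n m f g j z) (fst (z l)) (snd (z l))) \<in> borel_measurable ?PN"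
    if l: "l < n + m" for l
  proof (rule borel_measurable_antimono_01_at[OF mu f_comp[OF l]])
    fix z assume "z \<in> space ?PN"
    then have x: "fst (z l) \<in> space MX" and y: "snd (z l) \<in> space MY"
      using space l by auto
    show "f \<nu> (fst (z l)) (snd (z l)) \<in> {0, 1}" for \<nu>
      using f_ind[OF x y] .
    show "f \<nu>' (fst (z l)) (snd (z l)) \<le> f \<nu> (fst (z l)) (snd (z l))" if "\<nu> \<le> \<nu>'" "\<nu>' < \<infinity>" for \<nu> \<nu>'
      using f_mono[OF x y that] .
    show "eventually (\<lambda>\<nu>'. f \<nu>' (fst (z l)) (snd (z l)) = f \<nu> (fst (z l)) (snd (z l))) (at_right \<nu>)"
      if "\<nu> < \<infinity>" for \<nu>
      using f_eventually_const[OF x y that] .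
    show "f \<infinity> (fst (z l)) (snd (z l)) = 0"
      using f_inf[OF x y] .
  qed
  show ?thesis
    unfolding oracle_weight_def Let_def using j k
    by (intro borel_measurable_divide borel_measurable_sum f_mu) auto
qed

end

locale fdr_sample = fdr_setting MX MY f g \<alpha> n m + prob_space M
  for MX :: "'x measure" and MY :: "'y measure"
    and f :: "ennreal \<Rightarrow> 'x \<Rightarrow> 'y \<Rightarrow> real" and g :: "ennreal \<Rightarrow> 'x \<Rightarrow> real"
    and \<alpha> :: real and n m :: nat and M :: "'a measure" +
  fixes Z :: "nat \<Rightarrow> 'a \<Rightarrow> 'x \<times> 'y" and P :: "('x \<times> 'y) measure"
  assumes indep: "indep_vars (\<lambda>_. MX \<Otimes>\<^sub>M MY) Z {..<n + m}"
    and ident: "\<And>i. i < n + m \<Longrightarrow> distr M (MX \<Otimes>\<^sub>M MY) (Z i) = P"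
begin

definition sample :: "'a \<Rightarrow> nat \<Rightarrow> 'x \<times> 'y" where
  "sample \<omega> = (\<lambda>i\<in>{..<n + m}. Z i \<omega>)"

lemma measurable_sample: "sample \<in> measurable M (\<Pi>\<^sub>M i\<in>{..<n + m}. MX \<Otimes>\<^sub>M MY)"
  unfolding sample_def using indep by (auto simp: indep_vars_def2 intro!: measurable_restrict)

lemma Z_in_space:
  assumes "\<omega> \<in> space M" "i < n + m"
  shows "fst (Z i \<omega>) \<in> space MX \<and> snd (Z i \<omega>) \<in> space MY"
  using measurable_space[OF measurable_sample assms(1)] assms(2)
  by (auto simp: sample_def space_PiM space_pair_measure Pi_iff mem_Times_iff)

lemma integrable_oracle_weight:
  assumes j: "j < m" and k: "k \<in> insert (n + j) {..<n}"
  shows "integrable M (\<lambda>\<omega>. oracle_weight \<alpha> n m f g j k (sample \<omega>))"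
proof (rule integrable_const_bound[where B = 1])
  show "AE \<omega> in M. norm (oracle_weight \<alpha> n m f g j k (sample \<omega>)) \<le> 1"
    using oracle_weight_nonneg oracle_weight_le_1 Z_in_space j k
    by (intro AE_I2) (fastforce simp: sample_def)
  show "(\<lambda>\<omega>. oracle_weight \<alpha> n m f g j k (sample \<omega>)) \<in> borel_measurable M"
    using measurable_compose[OF measurable_sample borel_measurable_oracle_weight] j k by auto
qed

lemma expectation_oracle_weight_transpose:
  assumes j: "j < m" and k: "k < n"
  shows "expectation (\<lambda>\<omega>. oracle_weight \<alpha> n m f g j k (sample \<omega>))
       = expectation (\<lambda>\<omega>. oracle_weight \<alpha> n m f g j (n + j) (sample \<omega>))"
proof -
  have "expectation (\<lambda>\<omega>. oracle_weight \<alpha> n m f g j k (sample \<omega>)) = expectation (\<lambda>\<omega>.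
      oracle_weight \<alpha> n m f g j (n + j) (\<lambda>i\<in>{..<n + m}. Z (Transposition.transpose k (n + j) i) \<omega>))"
    using j k by (intro Bochner_Integration.integral_cong refl oracle_weight_transpose[symmetric])
      (auto simp: sample_def Transposition.transpose_def)
  also have "\<dots> = expectation (\<lambda>\<omega>. oracle_weight \<alpha> n m f g j (n + j) (sample \<omega>))"
    unfolding sample_def using j k
    by (intro expectation_iid_permute[OF indep ident] permutes_swap_id borel_measurable_oracle_weight) auto
  finally show ?thesis .
qed

lemma expectation_oracle_weight_le:
  assumes j: "j < m"
  shows "expectation (\<lambda>\<omega>. oracle_weight \<alpha> n m f g j (n + j) (sample \<omega>)) \<le> 1 / real (n + 1)"
proof -
  let ?T = "insert (n + j) {..<n}" and ?W = "\<lambda>k \<omega>. oracle_weight \<alpha> n m f g j k (sample \<omega>)"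
  have "real (n + 1) * expectation (?W (n + j)) = (\<Sum>k\<in>?T. expectation (?W (n + j)))"
    by simp
  also have "\<dots> = (\<Sum>k\<in>?T. expectation (?W k))"
    using j by (intro sum.cong refl) (auto simp: expectation_oracle_weight_transpose)
  also have "\<dots> = expectation (\<lambda>\<omega>. \<Sum>k\<in>?T. ?W k \<omega>)"
    using j by (intro Bochner_Integration.integral_sum[symmetric] integrable_oracle_weight)
  also have "\<dots> \<le> expectation (\<lambda>_. 1)"
  proof (rule integral_mono)
    show "integrable M (\<lambda>\<omega>. \<Sum>k\<in>?T. ?W k \<omega>)"
      using j by (intro Bochner_Integration.integrable_sum integrable_oracle_weight)
    show "(\<Sum>k\<in>?T. ?W k \<omega>) \<le> 1" for \<omega>
      by (rule sum_oracle_weight_le_1)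
  qed simp
  finally show ?thesis
    by (simp add: field_simps prob_space)
qed

lemma integrable_sum_oracle_weight:
  "integrable M (\<lambda>\<omega>. \<Sum>j<m. oracle_weight \<alpha> n m f g j (n + j) (sample \<omega>))"
  by (intro Bochner_Integration.integrable_sum integrable_oracle_weight) auto

lemma expectation_sum_oracle_weight_le:
  "expectation (\<lambda>\<omega>. \<alpha> * real (n + 1) / real m *
      (\<Sum>j<m. oracle_weight \<alpha> n m f g j (n + j) (sample \<omega>))) \<le> \<alpha>"
proof -
  let ?c = "\<alpha> * real (n + 1) / real m"
  let ?W = "\<lambda>j \<omega>. oracle_weight \<alpha> n m f g j (n + j) (sample \<omega>)"
  have "expectation (\<lambda>\<omega>. ?c * (\<Sum>j<m. ?W j \<omega>)) = ?c * (\<Sum>j<m. expectation (?W j))"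
    by (simp add: Bochner_Integration.integral_sum integrable_oracle_weight)
  also have "\<dots> \<le> ?c * (\<Sum>j<m. 1 / real (n + 1))"
    using alpha_pos expectation_oracle_weight_le by (intro mult_left_mono sum_mono) auto
  also have "\<dots> = \<alpha>"
    using m_pos by simp
  finally show ?thesis .
qed

end

theorem lemma3:
  fixes M :: "'a measure" and MX :: "'x measure" and MY :: "'y measure"
    and P :: "('x \<times> 'y) measure"
    and X :: "nat \<Rightarrow> 'a \<Rightarrow> 'x" and Y :: "nat \<Rightarrow> 'a \<Rightarrow> 'y"
    and f :: "ennreal \<Rightarrow> 'x \<Rightarrow> 'y \<Rightarrow> real" and g :: "ennreal \<Rightarrow> 'x \<Rightarrow> real"
    and \<alpha> :: real and n m :: nat
  assumes "prob_space M"
    and "0 < \<alpha>" "\<alpha> < 1" and "0 < m"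
    and f_meas: "\<And>\<mu>. (\<lambda>(x, y). f \<mu> x y) \<in> borel_measurable (MX \<Otimes>\<^sub>M MY)"
    and g_meas: "\<And>\<mu>. g \<mu> \<in> borel_measurable MX"
    and f_ind: "\<And>\<mu> x y. x \<in> space MX \<Longrightarrow> y \<in> space MY \<Longrightarrow> f \<mu> x y \<in> {0, 1}"
    and g_ind: "\<And>\<mu> x. x \<in> space MX \<Longrightarrow> g \<mu> x \<in> {0, 1}"
    and f_mono: "\<And>\<mu> \<nu> x y. x \<in> space MX \<Longrightarrow> y \<in> space MY \<Longrightarrow> \<mu> \<le> \<nu> \<Longrightarrow> \<nu> < \<infinity>
                  \<Longrightarrow> f \<nu> x y \<le> f \<mu> x y"
    and f_le_g: "\<And>\<mu> x y. x \<in> space MX \<Longrightarrow> y \<in> space MY \<Longrightarrow> \<mu> < \<infinity> \<Longrightarrow> f \<mu> x y \<le> g \<mu> x"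
    and f_rcont: "\<And>\<mu> x y. x \<in> space MX \<Longrightarrow> y \<in> space MY \<Longrightarrow> \<mu> < \<infinity>
                  \<Longrightarrow> ((\<lambda>\<nu>. f \<nu> x y) \<longlongrightarrow> f \<mu> x y) (at_right \<mu>)"
    and g_rcont: "\<And>\<mu> x. x \<in> space MX \<Longrightarrow> \<mu> < \<infinity>
                  \<Longrightarrow> ((\<lambda>\<nu>. g \<nu> x) \<longlongrightarrow> g \<mu> x) (at_right \<mu>)"
    and f_inf: "\<And>x y. x \<in> space MX \<Longrightarrow> y \<in> space MY \<Longrightarrow> f \<infinity> x y = 0"
    and g_inf: "\<And>x. x \<in> space MX \<Longrightarrow> g \<infinity> x = 0"
    and indep: "prob_space.indep_vars M (\<lambda>_. MX \<Otimes>\<^sub>M MY) (\<lambda>i \<omega>. (X i \<omega>, Y i \<omega>)) {..<n + m}"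
    and ident: "\<And>i. i < n + m \<Longrightarrow> distr M (MX \<Otimes>\<^sub>M MY) (\<lambda>\<omega>. (X i \<omega>, Y i \<omega>)) = P"
  shows "prob_space.expectation M
           (\<lambda>\<omega>. let \<mu> = mu_alpha \<alpha> n m f g (\<lambda>i. X i \<omega>) (\<lambda>i. Y i \<omega>) in
                 (\<Sum>i<m. f \<mu> (X (n + i) \<omega>) (Y (n + i) \<omega>)) / max 1 (\<Sum>i<m. g \<mu> (X (n + i) \<omega>)))
         \<le> \<alpha>"
proof -
  define Z where "Z = (\<lambda>i \<omega>. (X i \<omega>, Y i \<omega>))"
  interpret fdr_sample MX MY f g \<alpha> n m M Z P
    by (intro fdr_sample.intro fdr_setting.intro fdr_sample_axioms.intro) (simp_all only: assms Z_def)
  let ?W = "\<lambda>j \<omega>. oracle_weight \<alpha> n m f g j (n + j) (sample \<omega>)"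
  show ?thesis
  proof (rule order_trans[OF integral_mono' expectation_sum_oracle_weight_le])
    show "integrable M (\<lambda>\<omega>. \<alpha> * real (n + 1) / real m * (\<Sum>j<m. ?W j \<omega>))"
      using integrable_sum_oracle_weight by simp
  next
    fix \<omega> assume "\<omega> \<in> space M"
    then have XY: "X i \<omega> \<in> space MX \<and> Y i \<omega> \<in> space MY" if "i < n + m" for i
      using Z_in_space[of \<omega> i] that by (simp add: Z_def)
    have sample: "sample \<omega> i = (X i \<omega>, Y i \<omega>)" if "i < n + m" for i
      using that by (simp add: sample_def) (simp add: Z_def)
    show "0 \<le> \<alpha> * real (n + 1) / real m * (\<Sum>j<m. ?W j \<omega>)"
      using alpha_pos XY sample by (intro mult_nonneg_nonneg sum_nonneg oracle_weight_nonneg) auto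
    show "(let \<mu> = mu_alpha \<alpha> n m f g (\<lambda>i. X i \<omega>) (\<lambda>i. Y i \<omega>) in
            (\<Sum>i<m. f \<mu> (X (n + i) \<omega>) (Y (n + i) \<omega>)) / max 1 (\<Sum>i<m. g \<mu> (X (n + i) \<omega>)))
          \<le> \<alpha> * real (n + 1) / real m * (\<Sum>j<m. ?W j \<omega>)"
      using FDP_le_sum_oracle_weight[of "sample \<omega>" "\<lambda>i. X i \<omega>" "\<lambda>i. Y i \<omega>", OF sample XY] by simp
  qed
qed

end
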